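(* Along a $C^1$ curve $z(s)$ with tangent $v^\mu$ in a Lorentzian 4-manifold, let $p^\mu(s)$, antisymmetric $S^{\mu\nu}(s)$, a timelike unit vector $u^\mu(s)$ and a scalar $M(s)>0$ be differentiable, with $p^\mu=Mu^\mu$, $p_\nu S^{\mu\nu}=0$ and $u_\kappa v^\kappa=-1$. Define $F^\nu$ and $L^{\kappa\lambda}$ by $$F^\nu=\frac{\delta p^\nu}{\delta s}-\tfrac12 S^{\kappa\lambda}v^\mu R_{\kappa\lambda\mu}{}^{\nu},\qquad L^{\kappa\lambda}=\frac{\delta S^{\kappa\lambda}}{\delta s}-2p^{[\kappa}v^{\lambda]},$$ and assume $M^2+\tfrac14 S^{\kappa\lambda}S^{\tau\nu}R_{\kappa\lambda\tau\nu}\neq0$. Then $$Mv^\mu=p^\mu-u_\nu L^{\mu\nu}-\frac{S^{\mu\nu}\Big[MF_\nu-\tfrac12 S^{\kappa\lambda}\big(p^\tau-u_\sigma L^{\tau\sigma}\big)R_{\kappa\lambda\nu\tau}\Big]}{M^2+\tfrac14 S^{\kappa\lambda}S^{\tau\nu}R_{\kappa\lambda\tau\nu}} .$$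
   Context: $\delta/\delta s=v^\mu\nabla_\mu$; $R_{\kappa\lambda\mu\nu}$ is the Riemann tensor with the algebraic symmetries $R_{\kappa\lambda\mu\nu}=-R_{\lambda\kappa\mu\nu}=-R_{\kappa\lambda\nu\mu}=R_{\mu\nu\kappa\lambda}$ and $R_{\kappa[\lambda\mu\nu]}=0$; indices lowered with the metric; $A^{[\kappa}B^{\lambda]}=\tfrac12(A^\kappa B^\lambda-A^\lambda B^\kappa)$. *)

theory Defs
  imports "HOL-Analysis.Analysis" "HOL-Library.Numeral_Type"
begin

text \<open>Coordinate components along the curve in a chart of the 4-manifold.
  Index type: the 4-element type 4. Upper-index vectors are functions 4 => real,
  rank-2 tensors 4 => 4 => real, Christoffel symbols Gam mu alpha beta stand for
  Gamma^mu_{alpha beta}, the Riemann tensor R k l m n has all indices down.\<close>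

type_synonym vec = "4 \<Rightarrow> real"
type_synonym ten2 = "4 \<Rightarrow> 4 \<Rightarrow> real"
type_synonym ten3 = "4 \<Rightarrow> 4 \<Rightarrow> 4 \<Rightarrow> real"
type_synonym ten4 = "4 \<Rightarrow> 4 \<Rightarrow> 4 \<Rightarrow> 4 \<Rightarrow> real"

definition lower :: "ten2 \<Rightarrow> vec \<Rightarrow> vec" where
  "lower g A \<mu> = (\<Sum>\<nu>\<in>UNIV. g \<mu> \<nu> * A \<nu>)"

definition minkowski :: ten2 where
  "minkowski a b = (if a = b then (if a = 0 then -1 else 1) else 0)"

text \<open>Lorentzian metric at a point: symmetric and of signature (-,+,+,+),
  i.e. it admits an orthonormal frame E (frame vector a has components E mu a).\<close>
definition lorentzian :: "ten2 \<Rightarrow> bool" where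
  "lorentzian g \<longleftrightarrow> (\<forall>\<mu> \<nu>. g \<mu> \<nu> = g \<nu> \<mu>) \<and>
     (\<exists>E :: ten2. \<forall>a b. (\<Sum>\<mu>\<in>UNIV. \<Sum>\<nu>\<in>UNIV. g \<mu> \<nu> * E \<mu> a * E \<nu> b) = minkowski a b)"

definition inverse_metric :: "ten2 \<Rightarrow> ten2 \<Rightarrow> bool" where
  "inverse_metric g gi \<longleftrightarrow> (\<forall>\<mu> \<nu>. (\<Sum>lm\<in>UNIV. g \<mu> lm * gi lm \<nu>) = (if \<mu> = \<nu> then 1 else 0))"

definition riemann_symmetries :: "ten4 \<Rightarrow> bool" where
  "riemann_symmetries R \<longleftrightarrow>
     (\<forall>k l m n. R k l m n = - R l k m n) \<and>
     (\<forall>k l m n. R k l m n = - R k l n m) \<and>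
     (\<forall>k l m n. R k l m n = R m n k l) \<and>
     (\<forall>k l m n. R k l m n + R k m n l + R k n l m = 0)"

text \<open>Covariant derivative along the curve (tangent v) of a vector field A
  with ordinary s-derivative A'.\<close>
definition covD_vec :: "ten3 \<Rightarrow> vec \<Rightarrow> vec \<Rightarrow> vec \<Rightarrow> vec" where
  "covD_vec Gam v A A' \<mu> = A' \<mu> + (\<Sum>\<alpha>\<in>UNIV. \<Sum>\<beta>\<in>UNIV. Gam \<mu> \<alpha> \<beta> * v \<alpha> * A \<beta>)"

definition covD_ten2 :: "ten3 \<Rightarrow> vec \<Rightarrow> ten2 \<Rightarrow> ten2 \<Rightarrow> ten2" where
  "covD_ten2 Gam v S S' \<mu> \<nu> = S' \<mu> \<nu>
     + (\<Sum>\<alpha>\<in>UNIV. \<Sum>\<beta>\<in>UNIV. Gam \<mu> \<alpha> \<beta> * v \<alpha> * S \<beta> \<nu>)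
     + (\<Sum>\<alpha>\<in>UNIV. \<Sum>\<beta>\<in>UNIV. Gam \<nu> \<alpha> \<beta> * v \<alpha> * S \<mu> \<beta>)"

definition force :: "ten2 \<Rightarrow> ten4 \<Rightarrow> vec \<Rightarrow> vec \<Rightarrow> ten2 \<Rightarrow> vec" where
  "force gi R v Dp S \<nu> = Dp \<nu> - (1/2) * (\<Sum>k\<in>UNIV. \<Sum>l\<in>UNIV. \<Sum>m\<in>UNIV. \<Sum>\<sigma>\<in>UNIV.
        S k l * v m * gi \<nu> \<sigma> * R k l m \<sigma>)"

text \<open>L^{kl} = delta S^{kl}/ds - 2 p^[k v^l] = delta S^{kl}/ds - (p^k v^l - p^l v^k)\<close>
definition torque :: "vec \<Rightarrow> vec \<Rightarrow> ten2 \<Rightarrow> ten2" where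
  "torque p v DS k l = DS k l - (p k * v l - p l * v k)"

end

theory Submission
  imports Defs
begin

text \<open>
  Differentiating the supplementary condition \<open>p\<^sub>\<nu> S\<^sup>\<mu>\<^sup>\<nu> = 0\<close> along the curve and using metric
  compatibility gives \<open>(\<delta>p/\<delta>s)\<^sub>\<nu> S\<^sup>\<mu>\<^sup>\<nu> + p\<^sub>\<nu> \<delta>S\<^sup>\<mu>\<^sup>\<nu>/\<delta>s = 0\<close>, i.e. \<open>M X\<^sup>\<mu> = -S\<^sup>\<mu>\<^sup>\<nu> (\<delta>p/\<delta>s)\<^sub>\<nu>\<close>
  for \<open>X\<^sup>\<mu> = u\<^sub>\<nu> \<delta>S\<^sup>\<mu>\<^sup>\<nu>/\<delta>s\<close>, while \<open>u\<cdot>v = -1\<close> turns \<open>u\<^sub>\<nu> L\<^sup>\<mu>\<^sup>\<nu>\<close> into \<open>X\<^sup>\<mu> + p\<^sup>\<mu> - M v\<^sup>\<mu>\<close>.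
  In four dimensions an antisymmetric S with a nonzero kernel vector has vanishing Pfaffian,
  so it is simple and satisfies the Pluecker relations; these collapse
  \<open>S\<^sup>\<mu>\<^sup>\<nu> S\<^sup>\<tau>\<^sup>\<rho> A\<^sub>\<nu>\<^sub>\<tau>\<close> to \<open>-\<onehalf> (S\<cdot>A) S\<^sup>\<mu>\<^sup>\<rho>\<close> for every antisymmetric A. Taking
  \<open>A\<^sub>\<nu>\<^sub>\<tau> = S\<^sup>\<kappa>\<^sup>\<lambda> R\<^sub>\<kappa>\<^sub>\<lambda>\<^sub>\<nu>\<^sub>\<tau>\<close>, the numerator of the formula becomes
  \<open>-(M\<^sup>2 + \<onequarter> S S R) X\<^sup>\<mu>\<close>, and the formula reduces to \<open>M v\<^sup>\<mu> = p\<^sup>\<mu> - (X\<^sup>\<mu> + p\<^sup>\<mu> - M v\<^sup>\<mu>) + X\<^sup>\<mu>\<close>.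
\<close>

lemma sum_rotate3:
  "(\<Sum>a\<in>A. \<Sum>b\<in>B. \<Sum>c\<in>C. f a b c) = (\<Sum>c\<in>C. \<Sum>a\<in>A. \<Sum>b\<in>B. f a b c)"
  by (subst sum.swap) (simp add: sum.swap[of _ B C])

lemma sum_swap_pairs:
  "(\<Sum>a\<in>A. \<Sum>b\<in>B. \<Sum>c\<in>C. \<Sum>d\<in>D. f a b c d) = (\<Sum>c\<in>C. \<Sum>d\<in>D. \<Sum>a\<in>A. \<Sum>b\<in>B. f a b c d)"
  by (subst sum_rotate3) (rule sum.cong[OF refl], rule sum_rotate3)

lemma lower_raise:
  assumes "inverse_metric g gi"
  shows "lower g (\<lambda>a. \<Sum>\<sigma>\<in>UNIV. gi a \<sigma> * Q \<sigma>) = Q"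
proof
  fix \<mu>
  have "lower g (\<lambda>a. \<Sum>\<sigma>\<in>UNIV. gi a \<sigma> * Q \<sigma>) \<mu> = (\<Sum>a\<in>UNIV. \<Sum>\<sigma>\<in>UNIV. g \<mu> a * gi a \<sigma> * Q \<sigma>)"
    unfolding lower_def by (simp add: sum_distrib_left mult.assoc)
  also have "\<dots> = (\<Sum>\<sigma>\<in>UNIV. (\<Sum>a\<in>UNIV. g \<mu> a * gi a \<sigma>) * Q \<sigma>)"
    by (subst sum.swap) (simp add: sum_distrib_right)
  also have "\<dots> = (\<Sum>\<sigma>\<in>UNIV. (if \<mu> = \<sigma> then Q \<sigma> else 0))"
    using assms unfolding inverse_metric_def by (intro sum.cong) auto
  also have "\<dots> = Q \<mu>"
    by simp
  finally show "lower g (\<lambda>a. \<Sum>\<sigma>\<in>UNIV. gi a \<sigma> * Q \<sigma>) \<mu> = Q \<mu>" .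
qed

lemma lower_force:
  assumes "inverse_metric g gi"
  shows "lower g (force gi R v Dp S) \<nu> =
           lower g Dp \<nu> - 1/2 * (\<Sum>k\<in>UNIV. \<Sum>l\<in>UNIV. \<Sum>m\<in>UNIV. S k l * v m * R k l m \<nu>)"
proof -
  define Q where "Q \<sigma> = (\<Sum>k\<in>UNIV. \<Sum>l\<in>UNIV. \<Sum>m\<in>UNIV. S k l * v m * R k l m \<sigma>)" for \<sigma>
  have "(\<Sum>k\<in>UNIV. \<Sum>l\<in>UNIV. \<Sum>m\<in>UNIV. \<Sum>\<sigma>\<in>UNIV. S k l * v m * gi a \<sigma> * R k l m \<sigma>)
      = (\<Sum>\<sigma>\<in>UNIV. gi a \<sigma> * Q \<sigma>)" for a
  proof -
    have "(\<Sum>k\<in>UNIV. \<Sum>l\<in>UNIV. \<Sum>m\<in>UNIV. \<Sum>\<sigma>\<in>UNIV. S k l * v m * gi a \<sigma> * R k l m \<sigma>)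
      = (\<Sum>k\<in>UNIV. \<Sum>\<sigma>\<in>UNIV. \<Sum>l\<in>UNIV. \<Sum>m\<in>UNIV. gi a \<sigma> * (S k l * v m * R k l m \<sigma>))"
      by (rule sum.cong[OF refl], subst sum_rotate3) (simp add: ac_simps)
    then show ?thesis unfolding Q_def by (subst (asm) sum.swap) (simp add: sum_distrib_left)
  qed
  then have "force gi R v Dp S = (\<lambda>a. Dp a - 1/2 * (\<Sum>\<sigma>\<in>UNIV. gi a \<sigma> * Q \<sigma>))"
    unfolding force_def by simp
  then have "lower g (force gi R v Dp S) \<nu> = lower g Dp \<nu> - 1/2 * lower g (\<lambda>a. \<Sum>\<sigma>\<in>UNIV. gi a \<sigma> * Q \<sigma>) \<nu>"
    unfolding lower_def by (simp add: right_diff_distrib sum_subtractf sum_distrib_left)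
  then show ?thesis
    unfolding lower_raise[OF assms] Q_def .
qed

lemma lower_metric_compatible:
  assumes metric_compat: "\<And>\<mu> \<nu>. g' \<mu> \<nu> =
      (\<Sum>lm\<in>UNIV. \<Sum>\<alpha>\<in>UNIV. Gam lm \<alpha> \<mu> * v \<alpha> * g lm \<nu> + Gam lm \<alpha> \<nu> * v \<alpha> * g \<mu> lm)"
  shows "lower g' p \<nu> = lower g (\<lambda>a. \<Sum>\<alpha>\<in>UNIV. \<Sum>\<beta>\<in>UNIV. Gam a \<alpha> \<beta> * v \<alpha> * p \<beta>) \<nu>
           + (\<Sum>lm\<in>UNIV. \<Sum>\<alpha>\<in>UNIV. Gam lm \<alpha> \<nu> * v \<alpha> * lower g p lm)"
proof -
  have "lower g (\<lambda>a. \<Sum>\<alpha>\<in>UNIV. \<Sum>\<beta>\<in>UNIV. Gam a \<alpha> \<beta> * v \<alpha> * p \<beta>) \<nu>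
        + (\<Sum>lm\<in>UNIV. \<Sum>\<alpha>\<in>UNIV. Gam lm \<alpha> \<nu> * v \<alpha> * lower g p lm)
      = (\<Sum>lm\<in>UNIV. \<Sum>\<alpha>\<in>UNIV. \<Sum>a\<in>UNIV. g \<nu> lm * (Gam lm \<alpha> a * v \<alpha> * p a))
        + (\<Sum>lm\<in>UNIV. \<Sum>\<alpha>\<in>UNIV. \<Sum>a\<in>UNIV. Gam lm \<alpha> \<nu> * v \<alpha> * (g lm a * p a))"
    unfolding lower_def by (simp add: sum_distrib_left)
  also have "\<dots> = (\<Sum>a\<in>UNIV. \<Sum>lm\<in>UNIV. \<Sum>\<alpha>\<in>UNIV. g \<nu> lm * (Gam lm \<alpha> a * v \<alpha> * p a))
        + (\<Sum>a\<in>UNIV. \<Sum>lm\<in>UNIV. \<Sum>\<alpha>\<in>UNIV. Gam lm \<alpha> \<nu> * v \<alpha> * (g lm a * p a))"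
    by (intro arg_cong2[where f = "(+)"] sum_rotate3)
  also have "\<dots> = lower g' p \<nu>"
    unfolding lower_def metric_compat
    by (simp add: sum_distrib_left sum_distrib_right sum.distrib algebra_simps)
  finally show ?thesis ..
qed

lemma covD_contract_leibniz:
  assumes metric_compat: "\<And>\<mu> \<nu>. g' \<mu> \<nu> =
      (\<Sum>lm\<in>UNIV. \<Sum>\<alpha>\<in>UNIV. Gam lm \<alpha> \<mu> * v \<alpha> * g lm \<nu> + Gam lm \<alpha> \<nu> * v \<alpha> * g \<mu> lm)"
  shows "(\<Sum>\<nu>\<in>UNIV. (lower g' p \<nu> + lower g p' \<nu>) * S \<mu> \<nu> + lower g p \<nu> * S' \<mu> \<nu>)
       = (\<Sum>\<nu>\<in>UNIV. lower g (covD_vec Gam v p p') \<nu> * S \<mu> \<nu>)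
         + (\<Sum>\<nu>\<in>UNIV. lower g p \<nu> * covD_ten2 Gam v S S' \<mu> \<nu>)
         - (\<Sum>\<alpha>\<in>UNIV. \<Sum>\<beta>\<in>UNIV. Gam \<mu> \<alpha> \<beta> * v \<alpha> * (\<Sum>\<nu>\<in>UNIV. lower g p \<nu> * S \<beta> \<nu>))"
proof -
  define P where "P = lower g p"
  define \<Gamma>p where "\<Gamma>p a = (\<Sum>\<alpha>\<in>UNIV. \<Sum>\<beta>\<in>UNIV. Gam a \<alpha> \<beta> * v \<alpha> * p \<beta>)" for a
  have lower_covD: "lower g (covD_vec Gam v p p') \<nu> = lower g p' \<nu> + lower g \<Gamma>p \<nu>" for \<nu>
    unfolding lower_def covD_vec_def \<Gamma>p_def by (simp add: distrib_left sum.distrib)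
  have "(\<Sum>\<nu>\<in>UNIV. P \<nu> * (\<Sum>\<alpha>\<in>UNIV. \<Sum>\<beta>\<in>UNIV. Gam \<nu> \<alpha> \<beta> * v \<alpha> * S \<mu> \<beta>))
      = (\<Sum>\<nu>\<in>UNIV. \<Sum>\<alpha>\<in>UNIV. \<Sum>\<beta>\<in>UNIV. P \<nu> * (Gam \<nu> \<alpha> \<beta> * v \<alpha> * S \<mu> \<beta>))"
    by (simp add: sum_distrib_left)
  also have "\<dots> = (\<Sum>\<beta>\<in>UNIV. \<Sum>\<nu>\<in>UNIV. \<Sum>\<alpha>\<in>UNIV. P \<nu> * (Gam \<nu> \<alpha> \<beta> * v \<alpha> * S \<mu> \<beta>))"
    by (rule sum_rotate3)
  also have "\<dots> = (\<Sum>\<beta>\<in>UNIV. (\<Sum>\<nu>\<in>UNIV. \<Sum>\<alpha>\<in>UNIV. Gam \<nu> \<alpha> \<beta> * v \<alpha> * P \<nu>) * S \<mu> \<beta>)"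
    by (simp add: sum_distrib_left sum_distrib_right ac_simps)
  also have "\<dots> = (\<Sum>\<nu>\<in>UNIV. (lower g' p \<nu> - lower g \<Gamma>p \<nu>) * S \<mu> \<nu>)"
    unfolding lower_metric_compatible[OF metric_compat] \<Gamma>p_def P_def by simp
  finally have connection_S: "(\<Sum>\<nu>\<in>UNIV. P \<nu> * (\<Sum>\<alpha>\<in>UNIV. \<Sum>\<beta>\<in>UNIV. Gam \<nu> \<alpha> \<beta> * v \<alpha> * S \<mu> \<beta>))
      = (\<Sum>\<nu>\<in>UNIV. (lower g' p \<nu> - lower g \<Gamma>p \<nu>) * S \<mu> \<nu>)" .
  have "(\<Sum>\<alpha>\<in>UNIV. \<Sum>\<beta>\<in>UNIV. Gam \<mu> \<alpha> \<beta> * v \<alpha> * (\<Sum>\<nu>\<in>UNIV. P \<nu> * S \<beta> \<nu>))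
      = (\<Sum>\<alpha>\<in>UNIV. \<Sum>\<beta>\<in>UNIV. \<Sum>\<nu>\<in>UNIV. Gam \<mu> \<alpha> \<beta> * v \<alpha> * (P \<nu> * S \<beta> \<nu>))"
    by (simp add: sum_distrib_left)
  also have "\<dots> = (\<Sum>\<nu>\<in>UNIV. \<Sum>\<alpha>\<in>UNIV. \<Sum>\<beta>\<in>UNIV. Gam \<mu> \<alpha> \<beta> * v \<alpha> * (P \<nu> * S \<beta> \<nu>))"
    by (rule sum_rotate3)
  also have "\<dots> = (\<Sum>\<nu>\<in>UNIV. P \<nu> * (\<Sum>\<alpha>\<in>UNIV. \<Sum>\<beta>\<in>UNIV. Gam \<mu> \<alpha> \<beta> * v \<alpha> * S \<beta> \<nu>))"
    by (simp add: sum_distrib_left ac_simps)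
  finally have connection_p: "(\<Sum>\<nu>\<in>UNIV. P \<nu> * (\<Sum>\<alpha>\<in>UNIV. \<Sum>\<beta>\<in>UNIV. Gam \<mu> \<alpha> \<beta> * v \<alpha> * S \<beta> \<nu>))
      = (\<Sum>\<alpha>\<in>UNIV. \<Sum>\<beta>\<in>UNIV. Gam \<mu> \<alpha> \<beta> * v \<alpha> * (\<Sum>\<nu>\<in>UNIV. P \<nu> * S \<beta> \<nu>))" ..
  have "(\<Sum>\<nu>\<in>UNIV. P \<nu> * covD_ten2 Gam v S S' \<mu> \<nu>)
      = (\<Sum>\<nu>\<in>UNIV. P \<nu> * S' \<mu> \<nu>)
        + (\<Sum>\<nu>\<in>UNIV. P \<nu> * (\<Sum>\<alpha>\<in>UNIV. \<Sum>\<beta>\<in>UNIV. Gam \<mu> \<alpha> \<beta> * v \<alpha> * S \<beta> \<nu>))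
        + (\<Sum>\<nu>\<in>UNIV. P \<nu> * (\<Sum>\<alpha>\<in>UNIV. \<Sum>\<beta>\<in>UNIV. Gam \<nu> \<alpha> \<beta> * v \<alpha> * S \<mu> \<beta>))"
    unfolding covD_ten2_def by (simp only: distrib_left sum.distrib)
  then show ?thesis
    unfolding P_def[symmetric] lower_covD connection_S connection_p
    by (simp add: sum.distrib sum_subtractf algebra_simps)
qed

lemma covD_spin_constraint:
  fixes g S :: "real \<Rightarrow> ten2" and p :: "real \<Rightarrow> vec"
  assumes "open I" "s \<in> I"
    and g_deriv: "\<And>\<mu> \<nu>. ((\<lambda>r. g r \<mu> \<nu>) has_real_derivative g' \<mu> \<nu>) (at s)"
    and p_deriv: "\<And>\<mu>. ((\<lambda>r. p r \<mu>) has_real_derivative p' \<mu>) (at s)"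
    and S_deriv: "\<And>\<mu> \<nu>. ((\<lambda>r. S r \<mu> \<nu>) has_real_derivative S' \<mu> \<nu>) (at s)"
    and metric_compat: "\<And>\<mu> \<nu>. g' \<mu> \<nu> =
      (\<Sum>lm\<in>UNIV. \<Sum>\<alpha>\<in>UNIV. Gam lm \<alpha> \<mu> * v \<alpha> * g s lm \<nu> + Gam lm \<alpha> \<nu> * v \<alpha> * g s \<mu> lm)"
    and constraint: "\<And>t \<mu>. t \<in> I \<Longrightarrow> (\<Sum>\<nu>\<in>UNIV. lower (g t) (p t) \<nu> * S t \<mu> \<nu>) = 0"
  shows "(\<Sum>\<nu>\<in>UNIV. lower (g s) (covD_vec Gam v (p s) p') \<nu> * S s \<mu> \<nu>)
         + (\<Sum>\<nu>\<in>UNIV. lower (g s) (p s) \<nu> * covD_ten2 Gam v (S s) S' \<mu> \<nu>) = 0"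
proof -
  define f where "f t = (\<Sum>\<nu>\<in>UNIV. lower (g t) (p t) \<nu> * S t \<mu> \<nu>)" for t
  have "(f has_real_derivative
      (\<Sum>\<nu>\<in>UNIV. (lower g' (p s) \<nu> + lower (g s) p' \<nu>) * S s \<mu> \<nu> + lower (g s) (p s) \<nu> * S' \<mu> \<nu>)) (at s)"
    unfolding f_def lower_def
    by (auto intro!: derivative_eq_intros g_deriv p_deriv S_deriv sum.cong
        simp: algebra_simps sum.distrib sum_distrib_right)
  moreover have "(f has_real_derivative 0) (at s)"
    using constraint unfolding f_def
    by (intro has_field_derivative_transform_within_open[OF DERIV_const \<open>open I\<close> \<open>s \<in> I\<close>]) auto
  ultimately have "(\<Sum>\<nu>\<in>UNIV. (lower g' (p s) \<nu> + lower (g s) p' \<nu>) * S s \<mu> \<nu> + lower (g s) (p s) \<nu> * S' \<mu> \<nu>) = 0"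
    by (rule DERIV_unique)
  then show ?thesis
    using covD_contract_leibniz[OF metric_compat, of "p s" p' "S s" \<mu> S'] constraint[OF \<open>s \<in> I\<close>]
    by simp
qed

definition pfaffian :: "ten2 \<Rightarrow> real" where
  "pfaffian S = S 1 2 * S 3 4 - S 1 3 * S 2 4 + S 1 4 * S 2 3"

definition plucker_relations :: "('a \<Rightarrow> 'a \<Rightarrow> real) \<Rightarrow> bool" where
  "plucker_relations S \<longleftrightarrow> (\<forall>a b c d. S a b * S c d - S a c * S b d + S a d * S b c = 0)"

lemma pfaffian_eq_0_of_kernel:
  fixes S :: ten2 and w :: vec
  assumes antisym: "\<And>a b. S a b = - S b a"
    and kernel: "\<And>\<mu>. (\<Sum>\<nu>\<in>UNIV. w \<nu> * S \<mu> \<nu>) = 0"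
    and nonzero: "w c \<noteq> 0"
  shows "pfaffian S = 0"
proof -
  have diag: "S i i = 0" for i
    using antisym[of i i] by simp
  have k: "w 1 * S m 1 + w 2 * S m 2 + w 3 * S m 3 + w 4 * S m 4 = 0" for m
    using kernel[of m] by (simp add: sum_4)
  note facts = k[of 1] k[of 2] k[of 3] k[of 4]
    antisym[of 2 1] antisym[of 3 1] antisym[of 4 1] antisym[of 3 2] antisym[of 4 2] antisym[of 4 3]
    diag[of 1] diag[of 2] diag[of 3] diag[of 4]
  \<comment> \<open>the dual of S times S is pfaffian S times the identity\<close>
  have "pfaffian S * w 1 = 0" "pfaffian S * w 2 = 0" "pfaffian S * w 3 = 0" "pfaffian S * w 4 = 0"
    using facts unfolding pfaffian_def by algebra+
  then have "pfaffian S * w c = 0"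
    using exhaust_4[of c] by auto
  with nonzero show ?thesis
    by simp
qed

lemma plucker_relations_of_pfaffian_eq_0:
  fixes S :: ten2
  assumes antisym: "\<And>a b. S a b = - S b a"
    and "pfaffian S = 0"
  shows "plucker_relations S"
  unfolding plucker_relations_def
proof (intro allI)
  fix a b c d :: 4
  have diag: "S i i = 0" for i
    using antisym[of i i] by simp
  note lower_triangle = antisym[of 2 1] antisym[of 3 1] antisym[of 4 1]
    antisym[of 3 2] antisym[of 4 2] antisym[of 4 3]
  show "S a b * S c d - S a c * S b d + S a d * S b c = 0"
    using exhaust_4[of a] exhaust_4[of b] exhaust_4[of c] exhaust_4[of d] \<open>pfaffian S = 0\<close>
    unfolding pfaffian_def
    by (elim disjE) (simp_all add: lower_triangle diag algebra_simps)
qed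

lemma plucker_relations_of_kernel:
  fixes S :: ten2 and w :: vec
  assumes antisym: "\<And>a b. S a b = - S b a"
    and kernel: "\<And>\<mu>. (\<Sum>\<nu>\<in>UNIV. w \<nu> * S \<mu> \<nu>) = 0"
    and "w c \<noteq> 0"
  shows "plucker_relations S"
  using pfaffian_eq_0_of_kernel[OF antisym kernel \<open>w c \<noteq> 0\<close>]
  by (rule plucker_relations_of_pfaffian_eq_0[OF antisym])

lemma plucker_contract:
  fixes S A :: "'a::finite \<Rightarrow> 'a \<Rightarrow> real"
  assumes "plucker_relations S"
    and A_antisym: "\<And>x y. A x y = - A y x"
  shows "(\<Sum>\<nu>\<in>UNIV. \<Sum>\<tau>\<in>UNIV. S \<mu> \<nu> * S \<tau> \<rho> * A \<nu> \<tau>)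
           = - 1/2 * (\<Sum>m\<in>UNIV. \<Sum>\<nu>\<in>UNIV. S m \<nu> * A m \<nu>) * S \<mu> \<rho>"
proof -
  define C where "C = (\<Sum>\<nu>\<in>UNIV. \<Sum>\<tau>\<in>UNIV. S \<mu> \<nu> * S \<tau> \<rho> * A \<nu> \<tau>)"
  define B where "B = (\<Sum>m\<in>UNIV. \<Sum>\<nu>\<in>UNIV. S m \<nu> * A m \<nu>)"
  have "C = (\<Sum>\<nu>\<in>UNIV. \<Sum>\<tau>\<in>UNIV. S \<mu> \<tau> * S \<nu> \<rho> * A \<nu> \<tau> - S \<mu> \<rho> * (S \<nu> \<tau> * A \<nu> \<tau>))"
    unfolding C_def
  proof (intro sum.cong refl)
    fix \<nu> \<tau>
    have "S \<mu> \<nu> * S \<tau> \<rho> - S \<mu> \<tau> * S \<nu> \<rho> + S \<mu> \<rho> * S \<nu> \<tau> = 0"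
      using \<open>plucker_relations S\<close> unfolding plucker_relations_def by blast
    then have "S \<mu> \<nu> * S \<tau> \<rho> = S \<mu> \<tau> * S \<nu> \<rho> - S \<mu> \<rho> * S \<nu> \<tau>"
      by simp
    then show "S \<mu> \<nu> * S \<tau> \<rho> * A \<nu> \<tau> = S \<mu> \<tau> * S \<nu> \<rho> * A \<nu> \<tau> - S \<mu> \<rho> * (S \<nu> \<tau> * A \<nu> \<tau>)"
      by (simp only:) (simp add: algebra_simps)
  qed
  also have "\<dots> = (\<Sum>\<nu>\<in>UNIV. \<Sum>\<tau>\<in>UNIV. S \<mu> \<tau> * S \<nu> \<rho> * A \<nu> \<tau>) - S \<mu> \<rho> * B"
    unfolding B_def by (simp add: sum_subtractf sum_distrib_left)
  also have "(\<Sum>\<nu>\<in>UNIV. \<Sum>\<tau>\<in>UNIV. S \<mu> \<tau> * S \<nu> \<rho> * A \<nu> \<tau>) = - C"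
    unfolding C_def by (subst sum.swap) (subst A_antisym, simp add: sum_negf)
  finally have "C = - C - S \<mu> \<rho> * B" .
  then show ?thesis
    unfolding C_def[symmetric] B_def[symmetric] by (simp add: algebra_simps)
qed

lemma spin_inversion_identity:
  fixes S A :: "'a::finite \<Rightarrow> 'a \<Rightarrow> real" and G X :: "'a \<Rightarrow> real"
  assumes plucker: "plucker_relations S"
    and A_antisym: "\<And>x y. A x y = - A y x"
    and MX: "\<And>\<mu>. M * X \<mu> = - (\<Sum>\<nu>\<in>UNIV. S \<mu> \<nu> * G \<nu>)"
    and "M \<noteq> 0"
  shows "(\<Sum>\<nu>\<in>UNIV. S \<mu> \<nu> * (M * G \<nu> + 1/2 * (\<Sum>\<tau>\<in>UNIV. A \<nu> \<tau> * X \<tau>)))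
           = - (M\<^sup>2 + 1/4 * (\<Sum>m\<in>UNIV. \<Sum>\<nu>\<in>UNIV. S m \<nu> * A m \<nu>)) * X \<mu>"
proof -
  define B where "B = (\<Sum>m\<in>UNIV. \<Sum>\<nu>\<in>UNIV. S m \<nu> * A m \<nu>)"
  define y where "y \<rho> = - G \<rho> / M" for \<rho>
  have X_eq: "X \<tau> = (\<Sum>\<rho>\<in>UNIV. S \<tau> \<rho> * y \<rho>)" for \<tau>
  proof -
    have "M * (\<Sum>\<rho>\<in>UNIV. S \<tau> \<rho> * y \<rho>) = - (\<Sum>\<rho>\<in>UNIV. S \<tau> \<rho> * G \<rho>)"
      using \<open>M \<noteq> 0\<close> unfolding y_def by (simp add: sum_distrib_left sum_negf)
    with MX[of \<tau>] \<open>M \<noteq> 0\<close> show ?thesis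
      by (metis mult_left_cancel)
  qed
  have "(\<Sum>\<nu>\<in>UNIV. S \<mu> \<nu> * (\<Sum>\<tau>\<in>UNIV. A \<nu> \<tau> * X \<tau>))
      = (\<Sum>\<rho>\<in>UNIV. y \<rho> * (\<Sum>\<nu>\<in>UNIV. \<Sum>\<tau>\<in>UNIV. S \<mu> \<nu> * S \<tau> \<rho> * A \<nu> \<tau>))"
  proof -
    have "(\<Sum>\<nu>\<in>UNIV. S \<mu> \<nu> * (\<Sum>\<tau>\<in>UNIV. A \<nu> \<tau> * X \<tau>))
        = (\<Sum>\<nu>\<in>UNIV. \<Sum>\<tau>\<in>UNIV. \<Sum>\<rho>\<in>UNIV. y \<rho> * (S \<mu> \<nu> * S \<tau> \<rho> * A \<nu> \<tau>))"
      unfolding X_eq by (simp add: sum_distrib_left ac_simps)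
    also have "\<dots> = (\<Sum>\<rho>\<in>UNIV. \<Sum>\<nu>\<in>UNIV. \<Sum>\<tau>\<in>UNIV. y \<rho> * (S \<mu> \<nu> * S \<tau> \<rho> * A \<nu> \<tau>))"
      by (rule sum_rotate3)
    finally show ?thesis
      by (simp only: sum_distrib_left)
  qed
  also have "\<dots> = (\<Sum>\<rho>\<in>UNIV. y \<rho> * (- 1/2 * B * S \<mu> \<rho>))"
    unfolding B_def plucker_contract[OF plucker A_antisym] ..
  also have "\<dots> = - 1/2 * B * X \<mu>"
    unfolding X_eq by (simp add: sum_distrib_left ac_simps)
  finally have AX: "(\<Sum>\<nu>\<in>UNIV. S \<mu> \<nu> * (\<Sum>\<tau>\<in>UNIV. A \<nu> \<tau> * X \<tau>)) = - 1/2 * B * X \<mu>" .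
  have MG: "(\<Sum>\<nu>\<in>UNIV. S \<mu> \<nu> * (M * G \<nu>)) = - M\<^sup>2 * X \<mu>"
    using MX[of \<mu>] by (simp add: sum_distrib_left ac_simps power2_eq_square)
  have "(\<Sum>\<nu>\<in>UNIV. S \<mu> \<nu> * (M * G \<nu> + 1/2 * (\<Sum>\<tau>\<in>UNIV. A \<nu> \<tau> * X \<tau>)))
      = (\<Sum>\<nu>\<in>UNIV. S \<mu> \<nu> * (M * G \<nu>)) + 1/2 * (\<Sum>\<nu>\<in>UNIV. S \<mu> \<nu> * (\<Sum>\<tau>\<in>UNIV. A \<nu> \<tau> * X \<tau>))"
    by (simp add: distrib_left sum.distrib sum_distrib_left mult.left_commute)
  then show ?thesis
    unfolding AX MG B_def[symmetric] by (simp add: algebra_simps)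
qed

definition spin_curvature :: "ten2 \<Rightarrow> ten4 \<Rightarrow> ten2" where
  "spin_curvature S R \<nu> \<tau> = (\<Sum>k\<in>UNIV. \<Sum>l\<in>UNIV. S k l * R k l \<nu> \<tau>)"

lemma spin_curvature_antisym:
  assumes "\<And>k l m n. R k l m n = - R k l n m"
  shows "spin_curvature S R \<nu> \<tau> = - spin_curvature S R \<tau> \<nu>"
  unfolding spin_curvature_def by (simp add: assms[of _ _ \<nu> \<tau>] sum_negf)

lemma sum_spin_curvature:
  "(\<Sum>k\<in>UNIV. \<Sum>l\<in>UNIV. \<Sum>\<tau>\<in>UNIV. S k l * w \<tau> * R k l \<nu> \<tau>) = (\<Sum>\<tau>\<in>UNIV. spin_curvature S R \<nu> \<tau> * w \<tau>)"
proof -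
  have "(\<Sum>k\<in>UNIV. \<Sum>l\<in>UNIV. \<Sum>\<tau>\<in>UNIV. S k l * w \<tau> * R k l \<nu> \<tau>)
      = (\<Sum>\<tau>\<in>UNIV. \<Sum>k\<in>UNIV. \<Sum>l\<in>UNIV. S k l * w \<tau> * R k l \<nu> \<tau>)"
    by (rule sum_rotate3)
  then show ?thesis
    unfolding spin_curvature_def by (simp add: sum_distrib_left sum_distrib_right ac_simps)
qed

lemma sum_sum_spin_curvature:
  "(\<Sum>\<kappa>\<in>UNIV. \<Sum>lm\<in>UNIV. \<Sum>\<tau>\<in>UNIV. \<Sum>\<nu>\<in>UNIV. S \<kappa> lm * S \<tau> \<nu> * R \<kappa> lm \<tau> \<nu>)
     = (\<Sum>m\<in>UNIV. \<Sum>\<nu>\<in>UNIV. S m \<nu> * spin_curvature S R m \<nu>)"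
  unfolding spin_curvature_def by (subst sum_swap_pairs) (simp add: sum_distrib_left ac_simps)

lemma lower_force_spin_curvature:
  assumes "inverse_metric g gi"
    and "\<And>k l m n. R k l m n = - R k l n m"
  shows "lower g (force gi R v Dp S) \<nu> = lower g Dp \<nu> + 1/2 * (\<Sum>\<tau>\<in>UNIV. spin_curvature S R \<nu> \<tau> * v \<tau>)"
  unfolding lower_force[OF assms(1)] sum_spin_curvature[symmetric]
  by (simp add: assms(2)[of _ _ _ \<nu>] sum_negf ac_simps)

lemma contract_torque:
  assumes "(\<Sum>\<nu>\<in>UNIV. w \<nu> * v \<nu>) = -1" "(\<Sum>\<nu>\<in>UNIV. w \<nu> * p \<nu>) = - M"
  shows "(\<Sum>\<nu>\<in>UNIV. w \<nu> * torque p v DS \<mu> \<nu>) = (\<Sum>\<nu>\<in>UNIV. w \<nu> * DS \<mu> \<nu>) + p \<mu> - M * v \<mu>"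
proof -
  have "(\<Sum>\<nu>\<in>UNIV. w \<nu> * torque p v DS \<mu> \<nu>)
      = (\<Sum>\<nu>\<in>UNIV. w \<nu> * DS \<mu> \<nu>) - p \<mu> * (\<Sum>\<nu>\<in>UNIV. w \<nu> * v \<nu>) + v \<mu> * (\<Sum>\<nu>\<in>UNIV. w \<nu> * p \<nu>)"
    unfolding torque_def by (simp add: algebra_simps sum.distrib sum_subtractf sum_distrib_left)
  with assms show ?thesis
    by simp
qed

lemma velocity_from_spin_constraint:
  fixes g gi S DS :: ten2 and R :: ten4 and v p u Dp :: vec and M :: real
  assumes inverse: "inverse_metric g gi"
    and R_antisym: "\<And>k l m n. R k l m n = - R k l n m"
    and S_antisym: "\<And>\<mu> \<nu>. S \<mu> \<nu> = - S \<nu> \<mu>"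
    and u_unit: "(\<Sum>\<mu>\<in>UNIV. lower g u \<mu> * u \<mu>) = -1"
    and M_nz: "M \<noteq> 0"
    and p_Mu: "\<And>\<mu>. p \<mu> = M * u \<mu>"
    and SSC: "\<And>\<mu>. (\<Sum>\<nu>\<in>UNIV. lower g p \<nu> * S \<mu> \<nu>) = 0"
    and uv: "(\<Sum>\<kappa>\<in>UNIV. lower g u \<kappa> * v \<kappa>) = -1"
    and covD_SSC: "\<And>\<mu>. (\<Sum>\<nu>\<in>UNIV. lower g Dp \<nu> * S \<mu> \<nu>) + (\<Sum>\<nu>\<in>UNIV. lower g p \<nu> * DS \<mu> \<nu>) = 0"
    and denom_nz: "M ^ 2 + (1/4) * (\<Sum>\<kappa>\<in>UNIV. \<Sum>lm\<in>UNIV. \<Sum>\<tau>\<in>UNIV. \<Sum>\<nu>\<in>UNIV.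
                     S \<kappa> lm * S \<tau> \<nu> * R \<kappa> lm \<tau> \<nu>) \<noteq> 0"
  shows "let F = force gi R v Dp S;
             L = torque p v DS;
             ul = lower g u;
             Fl = lower g F;
             W = (\<lambda>\<tau>. p \<tau> - (\<Sum>\<sigma>\<in>UNIV. ul \<sigma> * L \<tau> \<sigma>));
             D = M ^ 2 + (1/4) * (\<Sum>\<kappa>\<in>UNIV. \<Sum>lm\<in>UNIV. \<Sum>\<tau>\<in>UNIV. \<Sum>\<nu>\<in>UNIV.
                     S \<kappa> lm * S \<tau> \<nu> * R \<kappa> lm \<tau> \<nu>)
         in \<forall>\<mu>. M * v \<mu> =
              p \<mu> - (\<Sum>\<nu>\<in>UNIV. ul \<nu> * L \<mu> \<nu>)
              - (\<Sum>\<nu>\<in>UNIV. S \<mu> \<nu> * (M * Fl \<nu>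
                   - (1/2) * (\<Sum>\<kappa>\<in>UNIV. \<Sum>lm\<in>UNIV. \<Sum>\<tau>\<in>UNIV.
                        S \<kappa> lm * W \<tau> * R \<kappa> lm \<nu> \<tau>))) / D"
proof -
  define ul where "ul = lower g u"
  define L where "L = torque p v DS"
  define G where "G = lower g Dp"
  define X where "X \<mu> = (\<Sum>\<nu>\<in>UNIV. ul \<nu> * DS \<mu> \<nu>)" for \<mu>
  define A where "A = spin_curvature S R"
  define B where "B = (\<Sum>m\<in>UNIV. \<Sum>\<nu>\<in>UNIV. S m \<nu> * A m \<nu>)"
  have lower_p: "lower g p \<nu> = M * ul \<nu>" for \<nu>
    unfolding ul_def lower_def by (simp add: p_Mu sum_distrib_left ac_simps)
  have "(\<Sum>\<mu>\<in>UNIV. lower g p \<mu> * u \<mu>) \<noteq> 0"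
    using u_unit M_nz unfolding lower_p ul_def by (simp add: sum_distrib_left[symmetric] mult.assoc)
  then have "\<exists>\<kappa>. lower g p \<kappa> \<noteq> 0"
    by (rule contrapos_np) simp
  then obtain \<kappa> where "lower g p \<kappa> \<noteq> 0" ..
  then have plucker: "plucker_relations S"
    by (rule plucker_relations_of_kernel[OF S_antisym SSC])
  have MX: "M * X \<mu> = - (\<Sum>\<nu>\<in>UNIV. S \<mu> \<nu> * G \<nu>)" for \<mu>
    using covD_SSC[of \<mu>] unfolding X_def G_def
    by (simp add: lower_p sum_distrib_left ac_simps eq_neg_iff_add_eq_0)
  have "(\<Sum>\<nu>\<in>UNIV. ul \<nu> * p \<nu>) = - M"
    using u_unit unfolding ul_def by (simp add: p_Mu sum_distrib_left[symmetric] ac_simps)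
  with uv have u_L: "(\<Sum>\<nu>\<in>UNIV. ul \<nu> * L \<mu> \<nu>) = X \<mu> + p \<mu> - M * v \<mu>" for \<mu>
    unfolding L_def X_def ul_def by (rule contract_torque)
  have A_antisym: "A \<nu> \<tau> = - A \<tau> \<nu>" for \<nu> \<tau>
    unfolding A_def by (rule spin_curvature_antisym[OF R_antisym])
  have numerator: "(\<Sum>\<nu>\<in>UNIV. S \<mu> \<nu> * (M * lower g (force gi R v Dp S) \<nu>
        - 1/2 * (\<Sum>\<kappa>\<in>UNIV. \<Sum>lm\<in>UNIV. \<Sum>\<tau>\<in>UNIV. S \<kappa> lm * (p \<tau> - (\<Sum>\<sigma>\<in>UNIV. ul \<sigma> * L \<tau> \<sigma>)) * R \<kappa> lm \<nu> \<tau>)))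
      = - (M\<^sup>2 + 1/4 * B) * X \<mu>" for \<mu>
  proof -
    have "M * lower g (force gi R v Dp S) \<nu>
        - 1/2 * (\<Sum>\<kappa>\<in>UNIV. \<Sum>lm\<in>UNIV. \<Sum>\<tau>\<in>UNIV. S \<kappa> lm * (p \<tau> - (\<Sum>\<sigma>\<in>UNIV. ul \<sigma> * L \<tau> \<sigma>)) * R \<kappa> lm \<nu> \<tau>)
        = M * G \<nu> + 1/2 * (\<Sum>\<tau>\<in>UNIV. A \<nu> \<tau> * X \<tau>)" for \<nu>
      unfolding lower_force_spin_curvature[OF inverse R_antisym] G_def A_def
      by (subst sum_spin_curvature)
        (simp only: u_L, simp add: algebra_simps sum.distrib sum_subtractf sum_distrib_left)
    then show ?thesis
      using spin_inversion_identity[OF plucker A_antisym MX M_nz] unfolding B_def by simp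
  qed
  show ?thesis
    using denom_nz
    unfolding Let_def ul_def[symmetric] L_def[symmetric] sum_sum_spin_curvature A_def[symmetric] B_def[symmetric]
    unfolding numerator
    unfolding u_L
    by (simp add: field_simps)
qed

theorem mainTheorem9:
  fixes I :: "real set"
    and g gi :: "real \<Rightarrow> ten2"           \<comment> \<open>metric g_{mu nu} and inverse metric along the curve\<close>
    and g' :: "real \<Rightarrow> ten2"              \<comment> \<open>s-derivative of g_{mu nu}(z(s))\<close>
    and Gam :: "real \<Rightarrow> ten3"             \<comment> \<open>Christoffel symbols Gamma^mu_{ab}(z(s))\<close>
    and R :: "real \<Rightarrow> ten4"               \<comment> \<open>Riemann tensor R_{klmn}(z(s))\<close>
    and z v :: "real \<Rightarrow> vec"               \<comment> \<open>curve and its tangent\<close>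
    and p p' u u' :: "real \<Rightarrow> vec"
    and S S' :: "real \<Rightarrow> ten2"
    and M M' :: "real \<Rightarrow> real"
    and s :: real
  assumes I_open: "open I"
    and z_C1: "\<And>t \<mu>. t \<in> I \<Longrightarrow> ((\<lambda>r. z r \<mu>) has_real_derivative v t \<mu>) (at t)"
    and v_cont: "\<And>\<mu>. continuous_on I (\<lambda>r. v r \<mu>)"
    and g_lor: "\<And>t. t \<in> I \<Longrightarrow> lorentzian (g t)"
    and g_inv: "\<And>t. t \<in> I \<Longrightarrow> inverse_metric (g t) (gi t)"
    and Gam_sym: "\<And>t \<mu> \<alpha> \<beta>. t \<in> I \<Longrightarrow> Gam t \<mu> \<alpha> \<beta> = Gam t \<mu> \<beta> \<alpha>"
    and g_deriv: "\<And>t \<mu> \<nu>. t \<in> I \<Longrightarrow> ((\<lambda>r. g r \<mu> \<nu>) has_real_derivative g' t \<mu> \<nu>) (at t)"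
    and metric_compat: "\<And>t \<mu> \<nu>. t \<in> I \<Longrightarrow> g' t \<mu> \<nu> =
        (\<Sum>lm\<in>UNIV. \<Sum>\<alpha>\<in>UNIV. Gam t lm \<alpha> \<mu> * v t \<alpha> * g t lm \<nu> + Gam t lm \<alpha> \<nu> * v t \<alpha> * g t \<mu> lm)"
    and R_sym: "\<And>t. t \<in> I \<Longrightarrow> riemann_symmetries (R t)"
    and p_deriv: "\<And>t \<mu>. t \<in> I \<Longrightarrow> ((\<lambda>r. p r \<mu>) has_real_derivative p' t \<mu>) (at t)"
    and S_deriv: "\<And>t \<mu> \<nu>. t \<in> I \<Longrightarrow> ((\<lambda>r. S r \<mu> \<nu>) has_real_derivative S' t \<mu> \<nu>) (at t)"
    and u_deriv: "\<And>t \<mu>. t \<in> I \<Longrightarrow> ((\<lambda>r. u r \<mu>) has_real_derivative u' t \<mu>) (at t)"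
    and M_deriv: "\<And>t. t \<in> I \<Longrightarrow> (M has_real_derivative M' t) (at t)"
    and S_antisym: "\<And>t \<mu> \<nu>. t \<in> I \<Longrightarrow> S t \<mu> \<nu> = - S t \<nu> \<mu>"
    and u_unit: "\<And>t. t \<in> I \<Longrightarrow> (\<Sum>\<mu>\<in>UNIV. lower (g t) (u t) \<mu> * u t \<mu>) = -1"
    and M_pos: "\<And>t. t \<in> I \<Longrightarrow> M t > 0"
    and p_Mu: "\<And>t \<mu>. t \<in> I \<Longrightarrow> p t \<mu> = M t * u t \<mu>"
    and SSC: "\<And>t \<mu>. t \<in> I \<Longrightarrow> (\<Sum>\<nu>\<in>UNIV. lower (g t) (p t) \<nu> * S t \<mu> \<nu>) = 0"
    and uv: "\<And>t. t \<in> I \<Longrightarrow> (\<Sum>\<kappa>\<in>UNIV. lower (g t) (u t) \<kappa> * v t \<kappa>) = -1"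
    and s_in: "s \<in> I"
    and denom_nz: "M s ^ 2 + (1/4) * (\<Sum>\<kappa>\<in>UNIV. \<Sum>lm\<in>UNIV. \<Sum>\<tau>\<in>UNIV. \<Sum>\<nu>\<in>UNIV.
                     S s \<kappa> lm * S s \<tau> \<nu> * R s \<kappa> lm \<tau> \<nu>) \<noteq> 0"
  shows "let F = force (gi s) (R s) (v s) (covD_vec (Gam s) (v s) (p s) (p' s)) (S s);
             L = torque (p s) (v s) (covD_ten2 (Gam s) (v s) (S s) (S' s));
             ul = lower (g s) (u s);
             Fl = lower (g s) F;
             W = (\<lambda>\<tau>. p s \<tau> - (\<Sum>\<sigma>\<in>UNIV. ul \<sigma> * L \<tau> \<sigma>));
             D = M s ^ 2 + (1/4) * (\<Sum>\<kappa>\<in>UNIV. \<Sum>lm\<in>UNIV. \<Sum>\<tau>\<in>UNIV. \<Sum>\<nu>\<in>UNIV.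
                     S s \<kappa> lm * S s \<tau> \<nu> * R s \<kappa> lm \<tau> \<nu>)
         in \<forall>\<mu>. M s * v s \<mu> =
              p s \<mu> - (\<Sum>\<nu>\<in>UNIV. ul \<nu> * L \<mu> \<nu>)
              - (\<Sum>\<nu>\<in>UNIV. S s \<mu> \<nu> * (M s * Fl \<nu>
                   - (1/2) * (\<Sum>\<kappa>\<in>UNIV. \<Sum>lm\<in>UNIV. \<Sum>\<tau>\<in>UNIV.
                        S s \<kappa> lm * W \<tau> * R s \<kappa> lm \<nu> \<tau>))) / D"
proof -
  have R_antisym: "\<And>k l m n. R s k l m n = - R s k l n m"
    using R_sym[OF s_in] unfolding riemann_symmetries_def by blast
  have covD_SSC: "\<And>\<mu>. (\<Sum>\<nu>\<in>UNIV. lower (g s) (covD_vec (Gam s) (v s) (p s) (p' s)) \<nu> * S s \<mu> \<nu>)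
      + (\<Sum>\<nu>\<in>UNIV. lower (g s) (p s) \<nu> * covD_ten2 (Gam s) (v s) (S s) (S' s) \<mu> \<nu>) = 0"
    by (rule covD_spin_constraint[OF I_open s_in g_deriv[OF s_in] p_deriv[OF s_in] S_deriv[OF s_in]
          metric_compat[OF s_in] SSC])
  show ?thesis
    by (rule velocity_from_spin_constraint[OF g_inv[OF s_in] R_antisym S_antisym[OF s_in]
          u_unit[OF s_in] M_pos[OF s_in, THEN less_imp_neq, THEN not_sym] p_Mu[OF s_in] SSC[OF s_in]
          uv[OF s_in] covD_SSC denom_nz])
qed

end
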